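(* For integers $M,N,m,l,r$ with $1\leq m\leq l<N$, $M-m\geq N-l\geq 1$ and $0\leq r\leq M-N+2l-2m+2$, the polynomial \[ {M\brack m}{N\brack l}-q^{r}{M\brack m-1}{N\brack l+1} \] has nonnegative coefficients as a polynomial in $q$.
   Context: ${n\brack m}=\prod_{i=0}^{m-1}\frac{1-q^{n-i}}{1-q^{m-i}}$ denotes the Gaussian polynomial ($q$-binomial coefficient) for integers $n\ge m\ge0$. *)

theory Defs
  imports "HOL-Computational_Algebra.Polynomial"
begin

text \<open>Gaussian polynomial [n brack m] = prod_{i=0}^{m-1} (1 - q^(n-i)) / (1 - q^(m-i)),
  taken as exact polynomial division in int poly (the denominator divides the numerator).\<close>
definition gauss_binom :: "nat \<Rightarrow> nat \<Rightarrow> int poly" where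
  "gauss_binom n m =
     (\<Prod>i<m. 1 - monom 1 (n - i)) div (\<Prod>i<m. 1 - monom 1 (m - i))"

end

theory Submission
  imports Defs
begin

text \<open>
  Write \<open>\<Delta>(M, N, a, b, r)\<close> for
  \<open>[M brack a] [N brack b] - q\<^sup>r [M brack a - 1] [N brack b + 1]\<close>.
  Expanding \<open>[N brack b]\<close> and \<open>[N brack b + 1]\<close> by one of the two q-Pascal rules,
  or \<open>[M brack a - 1]\<close> and \<open>[M brack a]\<close>, writes \<open>\<Delta>\<close> as a sum of two instances of
  \<open>\<Delta>\<close> with \<open>M + N\<close> one smaller, one of them multiplied by a power of \<open>q\<close>.
  The Pascal rule is chosen according to whether \<open>r = 0\<close>, so that both instances
  again satisfy the hypotheses; in the base cases (\<open>a = 0\<close>, \<open>b = N\<close> or \<open>M = N\<close>)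
  \<open>\<Delta>\<close> is a product of Gaussian polynomials or zero.
\<close>

fun qbinom :: "nat \<Rightarrow> nat \<Rightarrow> int poly" where
  "qbinom 0 k = (if k = 0 then 1 else 0)"
| "qbinom (Suc n) 0 = 1"
| "qbinom (Suc n) (Suc k) = qbinom n k + monom 1 (Suc k) * qbinom n (Suc k)"

lemma qbinom_0_right [simp]: "qbinom n 0 = 1"
  by (cases n) auto

lemma qbinom_eq_0: "n < k \<Longrightarrow> qbinom n k = 0"
proof (induction n arbitrary: k)
  case (Suc n)
  then obtain k' where "k = Suc k'" by (cases k) auto
  with Suc show ?case by simp
qed simp

definition gauss_numer :: "nat \<Rightarrow> nat \<Rightarrow> int poly" where
  "gauss_numer n k = (\<Prod>i<k. 1 - monom 1 (n - i))"

definition gauss_denom :: "nat \<Rightarrow> int poly" where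
  "gauss_denom k = (\<Prod>i<k. 1 - monom 1 (k - i))"

lemma gauss_numer_0_right [simp]: "gauss_numer n 0 = 1"
  and gauss_denom_0 [simp]: "gauss_denom 0 = 1"
  by (simp_all add: gauss_numer_def gauss_denom_def)

lemma gauss_denom_Suc: "gauss_denom (Suc k) = gauss_denom k * (1 - monom 1 (Suc k))"
  unfolding gauss_denom_def by (subst prod.lessThan_Suc_shift) (simp add: mult.commute)

lemma gauss_numer_Suc_Suc: "gauss_numer (Suc n) (Suc k) = (1 - monom 1 (Suc n)) * gauss_numer n k"
  unfolding gauss_numer_def by (subst prod.lessThan_Suc_shift) simp

lemma gauss_numer_Suc: "gauss_numer n (Suc k) = gauss_numer n k * (1 - monom 1 (n - k))"
  unfolding gauss_numer_def by simp

lemma gauss_numer_eq_0: "n < k \<Longrightarrow> gauss_numer n k = 0"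
  unfolding gauss_numer_def
  by (rule prod_zero) (auto simp: monom_eq_1_iff intro!: bexI[of _ n])

lemma gauss_denom_nonzero: "gauss_denom k \<noteq> 0"
  unfolding gauss_denom_def by (subst prod_zero_iff) (auto simp: monom_eq_1_iff)

lemma qbinom_mult_gauss_denom: "qbinom n k * gauss_denom k = gauss_numer n k"
proof (induction n arbitrary: k)
  case 0
  then show ?case
    by (cases k) (simp_all add: gauss_numer_eq_0)
next
  case (Suc n)
  show ?case
  proof (cases k)
    case 0
    then show ?thesis by simp
  next
    case (Suc k')
    have "qbinom (Suc n) (Suc k') * gauss_denom (Suc k') =
        qbinom n k' * gauss_denom k' * (1 - monom 1 (Suc k'))
        + monom 1 (Suc k') * (qbinom n (Suc k') * gauss_denom (Suc k'))"
      by (simp add: gauss_denom_Suc algebra_simps)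
    also have "\<dots> = gauss_numer n k' * (1 - monom 1 (Suc k'))
        + monom 1 (Suc k') * gauss_numer n (Suc k')"
      using Suc.IH by simp
    also have "\<dots> = gauss_numer (Suc n) (Suc k')"
    proof (cases "k' \<le> n")
      case True
      then have "monom 1 (Suc k') * monom 1 (n - k') = (monom 1 (Suc n) :: int poly)"
        by (simp add: mult_monom)
      then show ?thesis
        by (simp add: gauss_numer_Suc[of n k'] gauss_numer_Suc_Suc algebra_simps)
    qed (simp add: gauss_numer_eq_0)
    finally show ?thesis using Suc by simp
  qed
qed

lemma gauss_binom_eq_qbinom: "gauss_binom n k = qbinom n k"
proof -
  have "gauss_binom n k = gauss_numer n k div gauss_denom k"
    unfolding gauss_binom_def gauss_numer_def gauss_denom_def ..
  also have "\<dots> = qbinom n k"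
    using gauss_denom_nonzero by (simp flip: qbinom_mult_gauss_denom)
  finally show ?thesis .
qed

lemma qbinom_Suc_Suc':
  assumes "k \<le> n"
  shows "qbinom (Suc n) (Suc k) = monom 1 (n - k) * qbinom n k + qbinom n (Suc k)"
proof -
  have "(monom 1 (n - k) * qbinom n k + qbinom n (Suc k)) * gauss_denom (Suc k)
      = monom 1 (n - k) * (qbinom n k * gauss_denom k) * (1 - monom 1 (Suc k))
        + qbinom n (Suc k) * gauss_denom (Suc k)"
    by (simp add: gauss_denom_Suc algebra_simps)
  also have "\<dots> = monom 1 (n - k) * gauss_numer n k * (1 - monom 1 (Suc k))
      + gauss_numer n k * (1 - monom 1 (n - k))"
    by (simp add: qbinom_mult_gauss_denom gauss_numer_Suc)
  also have "\<dots> = gauss_numer n k * (1 - monom 1 (n - k) * monom 1 (Suc k))"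
    by (simp add: algebra_simps)
  also have "\<dots> = gauss_numer (Suc n) (Suc k)"
    using assms by (simp add: mult_monom gauss_numer_Suc_Suc mult.commute)
  also have "\<dots> = qbinom (Suc n) (Suc k) * gauss_denom (Suc k)"
    by (rule qbinom_mult_gauss_denom[symmetric])
  finally show ?thesis
    using gauss_denom_nonzero by (simp del: qbinom.simps(3))
qed

definition nonneg_coeffs :: "'a :: linordered_semidom poly \<Rightarrow> bool" where
  "nonneg_coeffs p \<longleftrightarrow> (\<forall>i. coeff p i \<ge> 0)"

lemma nonneg_coeffs_0 [simp]: "nonneg_coeffs 0"
  and nonneg_coeffs_1 [simp]: "nonneg_coeffs 1"
  and nonneg_coeffs_monom_1 [simp]: "nonneg_coeffs (monom 1 k)"
  unfolding nonneg_coeffs_def by (auto simp: coeff_1)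

lemma nonneg_coeffs_add: "nonneg_coeffs p \<Longrightarrow> nonneg_coeffs q \<Longrightarrow> nonneg_coeffs (p + q)"
  unfolding nonneg_coeffs_def by simp

lemma nonneg_coeffs_mult: "nonneg_coeffs p \<Longrightarrow> nonneg_coeffs q \<Longrightarrow> nonneg_coeffs (p * q)"
  unfolding nonneg_coeffs_def coeff_mult by (auto intro!: sum_nonneg)

lemma nonneg_coeffs_qbinom [simp]: "nonneg_coeffs (qbinom n k)"
  by (induction n k rule: qbinom.induct) (auto intro!: nonneg_coeffs_add nonneg_coeffs_mult)

text \<open>\<open>qbinom_pred n a\<close> is \<open>[n brack a - 1]\<close>, read as \<open>0\<close> for \<open>a = 0\<close> (not as \<open>[n brack 0]\<close>).\<close>

definition qbinom_pred :: "nat \<Rightarrow> nat \<Rightarrow> int poly" where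
  "qbinom_pred n a = (case a of 0 \<Rightarrow> 0 | Suc a' \<Rightarrow> qbinom n a')"

lemma qbinom_pred_0 [simp]: "qbinom_pred n 0 = 0"
  and qbinom_pred_Suc [simp]: "qbinom_pred n (Suc a) = qbinom n a"
  by (simp_all add: qbinom_pred_def)

lemma nonneg_coeffs_qbinom_pred [simp]: "nonneg_coeffs (qbinom_pred n a)"
  by (cases a) simp_all

lemma qbinom_Suc_pred: "qbinom (Suc n) a = qbinom_pred n a + monom 1 a * qbinom n a"
  by (cases a) (simp_all add: monom_0 one_pCons)

lemma qbinom_Suc_pred':
  "a \<le> Suc n \<Longrightarrow> qbinom (Suc n) a = monom 1 (Suc n - a) * qbinom_pred n a + qbinom n a"
  by (cases a) (simp_all add: qbinom_Suc_Suc' del: qbinom.simps(3))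

definition cross_diff :: "nat \<Rightarrow> nat \<Rightarrow> nat \<Rightarrow> nat \<Rightarrow> nat \<Rightarrow> int poly" where
  "cross_diff M N a b r =
     qbinom M a * qbinom N b - monom 1 r * qbinom_pred M a * qbinom N (b + 1)"

lemma cross_diff_Suc_N:
  "cross_diff M (Suc N) a (Suc b) r
     = monom 1 (Suc b) * cross_diff M N a (Suc b) (Suc r) + cross_diff M N a b r"
proof -
  have "monom 1 (Suc (Suc b)) = monom 1 (Suc b) * (monom 1 1 :: int poly)"
    and "monom 1 (Suc r) = monom 1 r * (monom 1 1 :: int poly)"
    by (simp_all add: mult_monom)
  then show ?thesis
    unfolding cross_diff_def by (simp add: algebra_simps)
qed

lemma cross_diff_Suc_N':
  assumes "Suc b \<le> N"
  shows "cross_diff M (Suc N) a (Suc b) (Suc r)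
           = cross_diff M N a (Suc b) (Suc r) + monom 1 (N - b) * cross_diff M N a b r"
proof -
  obtain c where c: "N - b = Suc c" "N - Suc b = c"
    using assms by (metis Suc_diff_Suc Suc_le_lessD diff_Suc_Suc)
  have "qbinom (Suc N) (Suc b) = monom 1 (Suc c) * qbinom N b + qbinom N (Suc b)"
    and "qbinom (Suc N) (Suc (Suc b)) = monom 1 c * qbinom N (Suc b) + qbinom N (Suc (Suc b))"
    using assms c by (simp_all add: qbinom_Suc_Suc' del: qbinom.simps(3))
  moreover have "monom 1 (Suc c) = monom 1 c * (monom 1 1 :: int poly)"
    and "monom 1 (Suc r) = monom 1 r * (monom 1 1 :: int poly)"
    by (simp_all add: mult_monom)
  ultimately show ?thesis
    unfolding cross_diff_def c by (simp add: algebra_simps)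
qed

lemma cross_diff_Suc_M:
  "cross_diff (Suc M) N (Suc a) b (Suc r)
     = cross_diff M N a b (Suc r) + monom 1 (Suc a) * cross_diff M N (Suc a) b r"
proof -
  have "monom 1 (Suc a) = monom 1 a * (monom 1 1 :: int poly)"
    and "monom 1 (Suc r) = monom 1 r * (monom 1 1 :: int poly)"
    by (simp_all add: mult_monom)
  then show ?thesis
    unfolding cross_diff_def qbinom_pred_Suc qbinom_Suc_pred[of M a] qbinom.simps(3)
    by (simp add: algebra_simps)
qed

lemma cross_diff_Suc_M':
  assumes "a \<le> M"
  shows "cross_diff (Suc M) N (Suc a) b r
           = monom 1 (M - a) * cross_diff M N a b (Suc r) + cross_diff M N (Suc a) b r"
proof -
  have "qbinom (Suc M) (Suc a) = monom 1 (M - a) * qbinom M a + qbinom M (Suc a)"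
    and "qbinom (Suc M) a = monom 1 (Suc M - a) * qbinom_pred M a + qbinom M a"
    using assms by (simp_all add: qbinom_Suc_Suc' qbinom_Suc_pred' del: qbinom.simps(3))
  moreover have "monom 1 (Suc M - a) = monom 1 (M - a) * (monom 1 1 :: int poly)"
    and "monom 1 (Suc r) = monom 1 r * (monom 1 1 :: int poly)"
    using assms by (simp_all add: mult_monom Suc_diff_le)
  ultimately show ?thesis
    unfolding cross_diff_def qbinom_pred_Suc by (simp add: algebra_simps)
qed

text \<open>The induction invariant: a relaxation of the hypotheses of the theorem that is
  preserved by the Pascal expansions (it admits \<open>a = 0\<close>, \<open>a = b + 1\<close> and \<open>b = N\<close>).\<close>

definition admissible :: "nat \<Rightarrow> nat \<Rightarrow> nat \<Rightarrow> nat \<Rightarrow> nat \<Rightarrow> bool" where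
  "admissible M N a b r \<longleftrightarrow>
     a \<le> b + 1 \<and> b \<le> N \<and> N + a \<le> M + b + 1 \<and> r + N + 2 * a \<le> M + 2 * b + 2"

lemma nonneg_cross_diff_reduce_N:
  assumes IH: "\<And>a b r. admissible M N a b r \<Longrightarrow> nonneg_coeffs (cross_diff M N a b r)"
    and adm: "admissible M (Suc N) a (Suc b) r" and "a \<le> Suc b" and "Suc b \<le> N"
  shows "nonneg_coeffs (cross_diff M (Suc N) a (Suc b) r)"
proof (cases r)
  case 0
  have "nonneg_coeffs (cross_diff M N a (Suc b) (Suc r))" "nonneg_coeffs (cross_diff M N a b r)"
    using adm assms(3,4) 0 by (auto intro!: IH simp: admissible_def)
  then show ?thesis
    unfolding cross_diff_Suc_N by (auto intro!: nonneg_coeffs_add nonneg_coeffs_mult)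
next
  case (Suc r')
  have "nonneg_coeffs (cross_diff M N a (Suc b) r)" "nonneg_coeffs (cross_diff M N a b r')"
    using adm assms(3,4) Suc by (auto intro!: IH simp: admissible_def)
  then show ?thesis
    unfolding Suc cross_diff_Suc_N'[OF \<open>Suc b \<le> N\<close>]
    by (auto intro!: nonneg_coeffs_add nonneg_coeffs_mult)
qed

lemma nonneg_cross_diff_reduce_M:
  assumes IH: "\<And>a b r. admissible M N a b r \<Longrightarrow> nonneg_coeffs (cross_diff M N a b r)"
    and adm: "admissible (Suc M) N (Suc a) a r" and "N \<le> M"
  shows "nonneg_coeffs (cross_diff (Suc M) N (Suc a) a r)"
proof (cases r)
  case 0
  have "nonneg_coeffs (cross_diff M N a a (Suc r))" "nonneg_coeffs (cross_diff M N (Suc a) a r)"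
    using adm assms(3) 0 by (auto intro!: IH simp: admissible_def)
  moreover have "a \<le> M"
    using adm assms(3) by (simp add: admissible_def)
  ultimately show ?thesis
    by (auto simp: cross_diff_Suc_M' intro!: nonneg_coeffs_add nonneg_coeffs_mult)
next
  case (Suc r')
  have "nonneg_coeffs (cross_diff M N a a r)" "nonneg_coeffs (cross_diff M N (Suc a) a r')"
    using adm assms(3) Suc by (auto intro!: IH simp: admissible_def)
  then show ?thesis
    unfolding Suc cross_diff_Suc_M by (auto intro!: nonneg_coeffs_add nonneg_coeffs_mult)
qed

lemma nonneg_cross_diff:
  "admissible M N a b r \<Longrightarrow> nonneg_coeffs (cross_diff M N a b r)"
proof (induction "M + N" arbitrary: M N a b r rule: less_induct)
  case less
  note adm = \<open>admissible M N a b r\<close>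
  consider "a = 0 \<or> b = N" | "0 < a" "a \<le> b" "b < N" | "a = b + 1" "b < N"
    using adm unfolding admissible_def by linarith
  then show ?case
  proof cases
    case 1
    then show ?thesis
      by (auto simp: cross_diff_def qbinom_eq_0 intro!: nonneg_coeffs_mult)
  next
    case 2
    then obtain N' b' where "N = Suc N'" "b = Suc b'"
      by (cases N; cases b) auto
    with 2 adm less.hyps show ?thesis
      by (auto intro!: nonneg_cross_diff_reduce_N)
  next
    case 3
    then have "N \<le> M"
      using adm by (simp add: admissible_def)
    show ?thesis
    proof (cases "N = M")
      case True
      with 3 adm have "cross_diff M N a b r = 0"
        by (simp add: admissible_def cross_diff_def mult.commute)
      then show ?thesis by simp
    next
      case False
      then obtain M' where "M = Suc M'"
        using \<open>N \<le> M\<close> by (cases M) auto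
      with 3 adm less.hyps \<open>N \<le> M\<close> False show ?thesis
        by (auto intro!: nonneg_cross_diff_reduce_M)
    qed
  qed
qed

theorem lemma3p2:
  fixes M N m l r :: nat
  assumes "1 \<le> m" and "m \<le> l" and "l < N"
    and "int M - int m \<ge> int N - int l" and "int N - int l \<ge> 1"
    and "int r \<le> int M - int N + 2 * int l - 2 * int m + 2"
  shows "\<forall>i. coeff (gauss_binom M m * gauss_binom N l
                 - monom 1 r * gauss_binom M (m - 1) * gauss_binom N (l + 1)) i \<ge> 0"
proof -
  have "admissible M N m l r"
    using assms by (simp add: admissible_def)
  then have "nonneg_coeffs (cross_diff M N m l r)"
    by (rule nonneg_cross_diff)
  moreover have "qbinom_pred M m = qbinom M (m - 1)"
    using assms(1) by (cases m) auto
  ultimately show ?thesis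
    by (simp add: cross_diff_def nonneg_coeffs_def gauss_binom_eq_qbinom)
qed

end
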